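(* Assume $\mathbb{E}[f(x)]\ge c$ and fix a type vector $\kappa$. Let ${\bf g}$ be a network that is stable under complete information (i.e., when all agents know $\kappa$, no selected pair would form a new link or sever an existing link of ${\bf g}$) and that belongs to one of the following classes: (1) the empty network; (2) a minimally connected (tree) network, including a star; (3) the complete network; (4) a core-periphery network; (5) a wheel network. Then ${\bf g}\in G^*_{IC}(\kappa)$.
   Context: Model. There are $N\ge 2$ agents $I=\{1,\dots,N\}$. Each agent $i$ has a private type $k_i\in X$; types are drawn i.i.d. from a prior distribution $H$ on $X$, and $\kappa=(k_1,\dots,k_N)$ is the type vector. There is a function $f:X\to\mathbb{R}_{>0}$, a link cost $c>0$ and a decay factor $\delta\in(0,1)$; $\mathbb{E}[f(x)]=\int_X f\,dH$ is assumed well defined. A network ${\bf g}$ is a set of unordered pairs $ij$ ($i\neq j$), called links. Agents $i,j$ are connected in ${\bf g}$ if there is a path of links between them; $d_{ij}$ is the length of a shortest such path ($\infty$ if not connected); $C_i$ denotes the component of ${\bf g}$ containing $i$. Agent $i$'s payoff is $u_i({\bf g})=\sum_{j\neq i,\ j\text{ connected to }i}\delta^{d_{ij}-1}f(k_j)-c\cdot\#\{j: ij\in{\bf g}\}$. Dynamics. The network is empty at $t=0$. In each period $t\ge1$ one unordered pair $(i,j)$ is selected; the sequence of selected pairs up to $t$ is the selection path $\gamma(t)$. The selected agents observe each other's components and simultaneously choose $a_{ij},a_{ji}\in\{0,1\}$ (1 = agree to form the link if absent / keep it if present, 0 = refuse / sever); after the period the link $ij$ is present iff $a_{ij}=a_{ji}=1$.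 Agents are myopic and play the stable optimistic equilibrium (SOE): agent $i$ chooses $1$ iff his expected current payoff (w.r.t. his belief) from the network resulting with the link $ij$ is at least his current payoff without it. Information. Under complete information every agent knows $\kappa$. Under incomplete information (simple updating rule), if $i$ and $j$ have ever been connected at some period so far, each knows the other's type; otherwise each one's belief about the other's type is the prior $H$. Emergence and stability. Given a selection path $\gamma(t)$, the resulting network ${\bf g}(\gamma(t))$ and beliefs $B(\gamma(t))$ are uniquely determined. A pair $({\bf g},B)$ is stable if no link is formed or severed along any subsequent selection path. $G^*_{IC}(\kappa)$ is the set of networks ${\bf g}$ such that, under incomplete information, ${\bf g}={\bf g}(\gamma(t))$ for some selection path $\gamma(t)$ and $({\bf g}(\gamma(t)),B(\gamma(t)))$ is stable. Network classes. ${\bf g}$ is complete if $ij\in{\bf g}$ for all $i\neq j$. A star: there is $i$ with $ij\in{\bf g}$ for all $j\neq i$ and no other links. Core-periphery: there is a nonempty $I'\subsetneq I$ such that all pairs in $I'$ are linked and every $j'\in I\setminus I'$ is linked to exactly one agent of $I'$ and to no other agent. Tree (minimally connected): connected, and removing any link disconnects it. Wheel: there is a bijection $\pi:I\to I$ such that ${\bf g}$ consists exactly of the links $\pi^{-1}(1)\pi^{-1}(2),\pi^{-1}(2)\pi^{-1}(3),\dots,\pi^{-1}(N-1)\pi^{-1}(N),\pi^{-1}(N)\pi^{-1}(1)$. *)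

theory Defs
  imports "HOL-Probability.Probability_Measure"
begin

(* Agents are 0..N-1. A network is a set of links; a link ij is the two-element set {i,j}. *)

definition network :: "nat \<Rightarrow> nat set set \<Rightarrow> bool" where
  "network N g \<longleftrightarrow> (\<forall>e\<in>g. \<exists>i j. i < N \<and> j < N \<and> i \<noteq> j \<and> e = {i, j})"

fun walk :: "nat set set \<Rightarrow> nat \<Rightarrow> nat \<Rightarrow> nat \<Rightarrow> bool" where
  "walk g i j 0 = (i = j)"
| "walk g i j (Suc n) = (\<exists>m. {i, m} \<in> g \<and> walk g m j n)"

definition conn :: "nat set set \<Rightarrow> nat \<Rightarrow> nat \<Rightarrow> bool" where
  "conn g i j \<longleftrightarrow> (\<exists>n. walk g i j n)"

(* shortest path length d_ij (only used when i, j are connected) *)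
definition dist :: "nat set set \<Rightarrow> nat \<Rightarrow> nat \<Rightarrow> nat" where
  "dist g i j = (LEAST n. walk g i j n)"

(* payoff of agent i in network g, when i values agent j at v j
   (v j = f(k_j) under knowledge, v j = E[f] under the prior: payoffs are linear in f(k_j),
   so the expected payoff replaces f(k_j) by its expectation) *)
definition payoff :: "nat \<Rightarrow> real \<Rightarrow> real \<Rightarrow> (nat \<Rightarrow> real) \<Rightarrow> nat set set \<Rightarrow> nat \<Rightarrow> real" where
  "payoff N \<delta> c v g i =
     (\<Sum>j\<in>{j. j < N \<and> j \<noteq> i \<and> conn g i j}. \<delta> ^ (dist g i j - 1) * v j)
     - c * real (card {j. j < N \<and> {i, j} \<in> g})"

definition agrees :: "nat \<Rightarrow> real \<Rightarrow> real \<Rightarrow> (nat \<Rightarrow> real) \<Rightarrow> nat set set \<Rightarrow> nat \<Rightarrow> nat \<Rightarrow> bool" where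
  "agrees N \<delta> c v g i j \<longleftrightarrow> payoff N \<delta> c v (insert {i, j} g) i \<ge> payoff N \<delta> c v (g - {{i, j}}) i"

definition decide :: "nat \<Rightarrow> real \<Rightarrow> real \<Rightarrow> (nat \<Rightarrow> nat \<Rightarrow> real) \<Rightarrow> nat set set \<Rightarrow> nat \<Rightarrow> nat \<Rightarrow> nat set set" where
  "decide N \<delta> c val g i j =
     (if agrees N \<delta> c (val i) g i j \<and> agrees N \<delta> c (val j) g j i
      then insert {i, j} g else g - {{i, j}})"

definition valid_path :: "nat \<Rightarrow> (nat \<times> nat) list \<Rightarrow> bool" where
  "valid_path N p \<longleftrightarrow> (\<forall>(i, j)\<in>set p. i < N \<and> j < N \<and> i \<noteq> j)"

definition stable_CI :: "nat \<Rightarrow> real \<Rightarrow> real \<Rightarrow> ('x \<Rightarrow> real) \<Rightarrow> (nat \<Rightarrow> 'x) \<Rightarrow> nat set set \<Rightarrow> bool" where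
  "stable_CI N \<delta> c f k g \<longleftrightarrow>
     (\<forall>i j. i < N \<longrightarrow> j < N \<longrightarrow> i \<noteq> j \<longrightarrow> decide N \<delta> c (\<lambda>_ j. f (k j)) g i j = g)"

(* State: network and knowledge relation K a b = "a and b have been connected at some period so far",
   in which case a knows b's type; otherwise a's belief about b's type is the prior H,
   with expectation Ef = E[f(x)]. *)

type_synonym state = "nat set set \<times> (nat \<Rightarrow> nat \<Rightarrow> bool)"

definition step_IC :: "nat \<Rightarrow> real \<Rightarrow> real \<Rightarrow> ('x \<Rightarrow> real) \<Rightarrow> (nat \<Rightarrow> 'x) \<Rightarrow> real
                        \<Rightarrow> state \<Rightarrow> nat \<times> nat \<Rightarrow> state" where
  "step_IC N \<delta> c f k Ef s p =
     (let g = fst s; K = snd s; (i, j) = p;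
          g' = decide N \<delta> c (\<lambda>a b. if K a b then f (k b) else Ef) g i j
      in (g', \<lambda>a b. K a b \<or> conn g' a b))"

definition run_IC :: "nat \<Rightarrow> real \<Rightarrow> real \<Rightarrow> ('x \<Rightarrow> real) \<Rightarrow> (nat \<Rightarrow> 'x) \<Rightarrow> real
                        \<Rightarrow> state \<Rightarrow> (nat \<times> nat) list \<Rightarrow> state" where
  "run_IC N \<delta> c f k Ef s p = foldl (step_IC N \<delta> c f k Ef) s p"

definition init_state :: state where
  "init_state = ({}, \<lambda>_ _. False)"

definition stable_IC :: "nat \<Rightarrow> real \<Rightarrow> real \<Rightarrow> ('x \<Rightarrow> real) \<Rightarrow> (nat \<Rightarrow> 'x) \<Rightarrow> real \<Rightarrow> state \<Rightarrow> bool" where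
  "stable_IC N \<delta> c f k Ef s \<longleftrightarrow>
     (\<forall>p. valid_path N p \<longrightarrow> fst (run_IC N \<delta> c f k Ef s p) = fst s)"

definition G_IC :: "nat \<Rightarrow> real \<Rightarrow> real \<Rightarrow> ('x \<Rightarrow> real) \<Rightarrow> (nat \<Rightarrow> 'x) \<Rightarrow> real \<Rightarrow> nat set set set" where
  "G_IC N \<delta> c f k Ef =
     {g. \<exists>p. valid_path N p \<and> fst (run_IC N \<delta> c f k Ef init_state p) = g
              \<and> stable_IC N \<delta> c f k Ef (run_IC N \<delta> c f k Ef init_state p)}"

definition is_complete :: "nat \<Rightarrow> nat set set \<Rightarrow> bool" where
  "is_complete N g \<longleftrightarrow> (\<forall>i j. i < N \<longrightarrow> j < N \<longrightarrow> i \<noteq> j \<longrightarrow> {i, j} \<in> g)"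

definition is_star :: "nat \<Rightarrow> nat set set \<Rightarrow> bool" where
  "is_star N g \<longleftrightarrow> (\<exists>i<N. g = {{i, j} | j. j < N \<and> j \<noteq> i})"

definition is_core_periphery :: "nat \<Rightarrow> nat set set \<Rightarrow> bool" where
  "is_core_periphery N g \<longleftrightarrow>
     (\<exists>I'. I' \<noteq> {} \<and> I' \<subset> {..<N} \<and>
        (\<forall>a\<in>I'. \<forall>b\<in>I'. a \<noteq> b \<longrightarrow> {a, b} \<in> g) \<and>
        (\<forall>j\<in>{..<N} - I'. card {a\<in>I'. {a, j} \<in> g} = 1 \<and>
                           (\<forall>b. b \<notin> I' \<longrightarrow> {j, b} \<notin> g)))"

definition is_tree :: "nat \<Rightarrow> nat set set \<Rightarrow> bool" where
  "is_tree N g \<longleftrightarrow>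
     (\<forall>i j. i < N \<longrightarrow> j < N \<longrightarrow> conn g i j) \<and>
     (\<forall>e\<in>g. \<not> (\<forall>i j. i < N \<longrightarrow> j < N \<longrightarrow> conn (g - {e}) i j))"

(* wheel: sigma = pi^{-1} lists the agents in cyclic order (0-indexed positions) *)
definition is_wheel :: "nat \<Rightarrow> nat set set \<Rightarrow> bool" where
  "is_wheel N g \<longleftrightarrow>
     (\<exists>\<sigma>. bij_betw \<sigma> {..<N} {..<N} \<and> g = {{\<sigma> m, \<sigma> ((m + 1) mod N)} | m. m < N})"

end

theory Submission
  imports Defs
begin

text \<open>
  Under incomplete information a stranger is valued at \<open>E[f] \<ge> c\<close>, so two agents who are not yet
  connected always agree to link. Hence a spanning subnetwork of \<open>g\<close> (the whole tree, the path
  of a wheel, or a star on the core together with the periphery links) can be grown by joining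
  unconnected pairs. Afterwards every agent has been connected to every other one, beliefs are
  the true types, the dynamics is the complete-information one, and \<open>g\<close> is stable. The missing
  links of \<open>g\<close> are then formed as well: the closing link of a wheel because \<open>g\<close> is stable, and a
  core link of a core-periphery network because its marginal value in any intermediate network
  containing the periphery links is at least its marginal value in \<open>g\<close>. For the empty network each
  pair is selected twice: strangers link, learn each other's types, and then sever the link, as
  they would under complete information.
\<close>

section \<open>Connectivity\<close>

lemma walk_mono: "walk g i j n \<Longrightarrow> g \<subseteq> g' \<Longrightarrow> walk g' i j n"
  by (induction n arbitrary: i) auto

lemma walk_snoc: "walk g i m n \<Longrightarrow> {m, j} \<in> g \<Longrightarrow> walk g i j (Suc n)"
  by (induction n arbitrary: i) auto

lemma walk_append: "walk g i m n \<Longrightarrow> walk g m j n' \<Longrightarrow> walk g i j (n + n')"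
  by (induction n arbitrary: i) auto

lemma walk_sym: "walk g i j n \<Longrightarrow> walk g j i n"
proof (induction n arbitrary: i)
  case (Suc n)
  then obtain m where "{i, m} \<in> g" "walk g m j n" by auto
  with Suc.IH show ?case by (metis walk_snoc insert_commute)
qed simp

lemma conn_refl [simp]: "conn g i i"
  unfolding conn_def by (rule exI[of _ 0]) simp

lemma conn_mono: "conn g i j \<Longrightarrow> g \<subseteq> g' \<Longrightarrow> conn g' i j"
  unfolding conn_def using walk_mono by blast

lemma conn_sym: "conn g i j \<Longrightarrow> conn g j i"
  unfolding conn_def using walk_sym by blast

lemma conn_trans: "conn g i m \<Longrightarrow> conn g m j \<Longrightarrow> conn g i j"
  unfolding conn_def using walk_append by blast

lemma conn_edge: "{i, j} \<in> g \<Longrightarrow> conn g i j"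
  unfolding conn_def by (rule exI[of _ 1]) auto

lemma conn_empty_iff [simp]: "conn {} a b \<longleftrightarrow> a = b"
  unfolding conn_def by (metis walk.elims(2) empty_iff walk.simps(1))

lemma conn_Diff_link:
  assumes uv: "conn (g - {{u, v}}) u v" and ab: "conn g a b"
  shows "conn (g - {{u, v}}) a b"
proof -
  obtain n where "walk g a b n" using ab unfolding conn_def by blast
  then show ?thesis
  proof (induction n arbitrary: a)
    case (Suc n)
    then obtain m where m: "{a, m} \<in> g" "walk g m b n" by auto
    have "conn (g - {{u, v}}) a m"
    proof (cases "{a, m} = {u, v}")
      case True
      then show ?thesis using uv conn_sym by (auto simp: doubleton_eq_iff)
    qed (use m in \<open>auto intro: conn_edge\<close>)
    then show ?case using Suc.IH m(2) conn_trans by blast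
  qed simp
qed

definition connected :: "nat \<Rightarrow> nat set set \<Rightarrow> bool" where
  "connected N g \<longleftrightarrow> (\<forall>a<N. \<forall>b<N. conn g a b)"

lemma connectedI_from: "(\<And>x. x < N \<Longrightarrow> conn g a x) \<Longrightarrow> connected N g"
  unfolding connected_def using conn_sym conn_trans by metis

definition isolated :: "nat set set \<Rightarrow> nat \<Rightarrow> bool" where
  "isolated h x \<longleftrightarrow> (\<forall>e\<in>h. x \<notin> e)"

lemma isolated_insert: "isolated (insert {a, b} h) x \<longleftrightarrow> isolated h x \<and> x \<noteq> a \<and> x \<noteq> b"
  unfolding isolated_def by auto

lemma isolated_conn:
  assumes "isolated h j" and "conn h x j"
  shows "x = j"
proof -
  obtain n where "walk h x j n" using assms(2) unfolding conn_def by blast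
  then show ?thesis
  proof (induction n arbitrary: x)
    case (Suc n)
    then obtain m where "{x, m} \<in> h" "walk h m j n" by auto
    moreover from this Suc.IH have "m = j" by blast
    ultimately show ?case using assms(1) unfolding isolated_def by auto
  qed simp
qed

section \<open>Discounted values and link decisions\<close>

definition discount :: "real \<Rightarrow> nat set set \<Rightarrow> nat \<Rightarrow> nat \<Rightarrow> real" where
  "discount \<delta> g i b = (if conn g i b then \<delta> ^ (Defs.dist g i b - 1) else 0)"

lemma walk_dist: "conn g i b \<Longrightarrow> walk g i b (Defs.dist g i b)"
  unfolding Defs.dist_def conn_def by (rule LeastI_ex)

lemma dist_le_walk: "walk g i b n \<Longrightarrow> Defs.dist g i b \<le> n"
  unfolding Defs.dist_def by (rule Least_le)

context
  fixes \<delta> :: real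
  assumes \<delta>: "0 \<le> \<delta>" "\<delta> \<le> 1"
begin

lemma discount_ge_walk: "walk g i b n \<Longrightarrow> \<delta> ^ (n - 1) \<le> discount \<delta> g i b"
  unfolding discount_def using dist_le_walk[of g i b n] \<delta>
  by (auto simp: conn_def intro!: power_decreasing)

lemma discount_le_no_short_walk:
  assumes "\<And>m. m < n \<Longrightarrow> \<not> walk g i b m"
  shows "discount \<delta> g i b \<le> \<delta> ^ (n - 1)"
proof (cases "conn g i b")
  case True
  then have "n \<le> Defs.dist g i b" using walk_dist assms by (meson not_less)
  with True \<delta> show ?thesis unfolding discount_def by (auto intro!: power_decreasing)
qed (use \<delta> in \<open>auto simp: discount_def\<close>)

lemma discount_mono:
  assumes "g \<subseteq> g'"
  shows "discount \<delta> g i b \<le> discount \<delta> g' i b"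
proof (cases "conn g i b")
  case True
  then have "walk g' i b (Defs.dist g i b)" using walk_dist walk_mono assms by blast
  with True show ?thesis using discount_ge_walk by (simp add: discount_def)
qed (simp add: discount_def \<delta>)

lemma discount_le_1: "i \<noteq> b \<Longrightarrow> discount \<delta> g i b \<le> 1"
  using discount_le_no_short_walk[of 1 g i b] by auto

lemma discount_le_delta:
  assumes "i \<noteq> b" "{i, b} \<notin> g"
  shows "discount \<delta> g i b \<le> \<delta>"
proof -
  have "\<not> walk g i b m" if "m < 2" for m
    using that \<open>i \<noteq> b\<close> \<open>{i, b} \<notin> g\<close> by (auto simp: less_2_cases_iff)
  then show ?thesis using discount_le_no_short_walk[of 2 g i b] by simp
qed

lemma discount_link: "{i, b} \<in> g \<Longrightarrow> 1 \<le> discount \<delta> g i b"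
  using discount_ge_walk[of g i b 1] by auto

lemma discount_two_links: "{i, m} \<in> g \<Longrightarrow> {m, b} \<in> g \<Longrightarrow> \<delta> \<le> discount \<delta> g i b"
  using discount_ge_walk[of g i b 2] by (auto simp: numeral_2_eq_2)

end

lemma payoff_discount:
  "payoff N \<delta> c v g i =
     (\<Sum>b | b < N \<and> b \<noteq> i. discount \<delta> g i b * v b) - c * real (card {j. j < N \<and> {i, j} \<in> g})"
proof -
  have fin: "finite {b. b < N \<and> b \<noteq> i}" by simp
  have conn_set: "{j. j < N \<and> j \<noteq> i \<and> conn g i j} = {b \<in> {b. b < N \<and> b \<noteq> i}. conn g i b}"
    by auto
  show ?thesis
    unfolding payoff_def conn_set sum.inter_filter[OF fin] by (auto simp: discount_def intro!: sum.cong)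
qed

definition marginal_gain :: "nat \<Rightarrow> real \<Rightarrow> (nat \<Rightarrow> real) \<Rightarrow> nat set set \<Rightarrow> nat \<Rightarrow> nat \<Rightarrow> real" where
  "marginal_gain N \<delta> v g i j =
     (\<Sum>b | b < N \<and> b \<noteq> i. (discount \<delta> (insert {i, j} g) i b - discount \<delta> (g - {{i, j}}) i b) * v b)"

lemma card_links_insert:
  fixes N :: nat and g :: "nat set set"
  assumes "i \<noteq> j" "j < N"
  shows "card {b. b < N \<and> {i, b} \<in> insert {i, j} g} = Suc (card {b. b < N \<and> {i, b} \<in> g - {{i, j}}})"
proof -
  have "{b. b < N \<and> {i, b} \<in> insert {i, j} g} = insert j {b. b < N \<and> {i, b} \<in> g - {{i, j}}}"
    using assms by (auto simp: doubleton_eq_iff)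
  moreover have "finite {b. b < N \<and> {i, b} \<in> g - {{i, j}}}" by (rule finite_subset[of _ "{..<N}"]) auto
  ultimately show ?thesis by simp
qed

lemma agrees_iff_marginal_gain:
  assumes "i \<noteq> j" "j < N"
  shows "agrees N \<delta> c v g i j \<longleftrightarrow> c \<le> marginal_gain N \<delta> v g i j"
  unfolding agrees_def payoff_discount card_links_insert[OF assms] marginal_gain_def
  by (simp add: left_diff_distrib sum_subtractf distrib_left) linarith

lemma payoff_cong:
  assumes "\<And>b. b < N \<Longrightarrow> b \<noteq> i \<Longrightarrow> conn g i b \<Longrightarrow> v b = v' b"
  shows "payoff N \<delta> c v g i = payoff N \<delta> c v' g i"
  unfolding payoff_def using assms by (auto intro!: sum.cong)

lemma agrees_cong:
  assumes "\<And>b. b < N \<Longrightarrow> b \<noteq> i \<Longrightarrow> conn (insert {i, j} g) i b \<Longrightarrow> v b = v' b"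
  shows "agrees N \<delta> c v g i j \<longleftrightarrow> agrees N \<delta> c v' g i j"
proof -
  have "conn (insert {i, j} g) i b" if "conn (g - {{i, j}}) i b" for b
    using conn_mono[OF that] by blast
  then have "payoff N \<delta> c v (g - {{i, j}}) i = payoff N \<delta> c v' (g - {{i, j}}) i"
    using assms by (intro payoff_cong) blast
  moreover have "payoff N \<delta> c v (insert {i, j} g) i = payoff N \<delta> c v' (insert {i, j} g) i"
    using assms by (rule payoff_cong)
  ultimately show ?thesis unfolding agrees_def by simp
qed

lemma decide_cong:
  assumes "\<And>b. b < N \<Longrightarrow> b \<noteq> i \<Longrightarrow> conn (insert {i, j} g) i b \<Longrightarrow> V i b = V' i b"
    and "\<And>b. b < N \<Longrightarrow> b \<noteq> j \<Longrightarrow> conn (insert {i, j} g) j b \<Longrightarrow> V j b = V' j b"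
  shows "decide N \<delta> c V g i j = decide N \<delta> c V' g i j"
  using assms agrees_cong[of N i j g "V i" "V' i" \<delta> c] agrees_cong[of N j i g "V j" "V' j" \<delta> c]
  unfolding decide_def by (simp add: insert_commute)

lemma decide_cong_network:
  assumes "insert {i, j} h = insert {i, j} h'" and "h - {{i, j}} = h' - {{i, j}}"
  shows "decide N \<delta> c V h i j = decide N \<delta> c V h' i j"
  using assms unfolding decide_def agrees_def by (simp add: insert_commute)

lemma decide_eq_insert:
  "agrees N \<delta> c (V i) h i j \<Longrightarrow> agrees N \<delta> c (V j) h j i \<Longrightarrow> decide N \<delta> c V h i j = insert {i, j} h"
  unfolding decide_def by simp

lemma stable_CI_agrees:
  assumes "stable_CI N \<delta> c f k g" and "{i, j} \<in> g" and "i < N" "j < N" "i \<noteq> j"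
  shows "agrees N \<delta> c (\<lambda>b. f (k b)) g i j"
proof (rule ccontr)
  assume "\<not> ?thesis"
  moreover have "decide N \<delta> c (\<lambda>_ b. f (k b)) g i j = g"
    using assms unfolding stable_CI_def by simp
  ultimately have "g - {{i, j}} = g" unfolding decide_def by simp
  then show False using assms(2) by blast
qed

context
  fixes \<delta> :: real
  assumes \<delta>: "0 \<le> \<delta>" "\<delta> \<le> 1"
begin

text \<open>Linking to an unconnected agent \<open>j\<close> raises \<open>j\<close>'s discount from \<open>0\<close> to \<open>1\<close> and no discount decreases.\<close>
lemma agrees_unconnected:
  assumes ij: "i \<noteq> j" "j < N" and unconn: "\<not> conn h i j"
    and v_nonneg: "\<And>b. b < N \<Longrightarrow> 0 \<le> v b" and "c \<le> v j"
  shows "agrees N \<delta> c v h i j"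
proof -
  let ?t = "\<lambda>b. (discount \<delta> (insert {i, j} h) i b - discount \<delta> (h - {{i, j}}) i b) * v b"
  have t_nonneg: "0 \<le> ?t b" if "b < N" for b
  proof -
    have "discount \<delta> (h - {{i, j}}) i b \<le> discount \<delta> (insert {i, j} h) i b"
      by (rule discount_mono[OF \<delta>]) blast
    then show ?thesis using v_nonneg[OF that] by simp
  qed
  have "discount \<delta> (h - {{i, j}}) i j = 0"
    using unconn conn_mono[of "h - {{i, j}}" i j h] by (auto simp: discount_def)
  moreover have "1 \<le> discount \<delta> (insert {i, j} h) i j" by (rule discount_link[OF \<delta>]) simp
  ultimately have "v j \<le> ?t j" using v_nonneg[OF ij(2)] by (simp add: mult_le_cancel_right1)
  also have "?t j \<le> marginal_gain N \<delta> v h i j"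
    unfolding marginal_gain_def by (rule member_le_sum) (use ij t_nonneg in simp_all)
  finally show ?thesis using agrees_iff_marginal_gain[OF ij] \<open>c \<le> v j\<close> by simp
qed

lemma marginal_gain_subnetwork:
  assumes hg: "h \<subseteq> g" and e: "{i, j} \<in> g" and v_nonneg: "\<And>b. b < N \<Longrightarrow> 0 \<le> v b"
    and attained: "\<And>b. b < N \<Longrightarrow> b \<noteq> i \<Longrightarrow>
        discount \<delta> g i b \<le> discount \<delta> (insert {i, j} h) i b \<or> discount \<delta> g i b \<le> discount \<delta> (g - {{i, j}}) i b"
  shows "marginal_gain N \<delta> v g i j \<le> marginal_gain N \<delta> v h i j"
  unfolding marginal_gain_def
proof (rule sum_mono, rule mult_right_mono)
  fix b assume b: "b \<in> {b. b < N \<and> b \<noteq> i}"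
  then show "0 \<le> v b" using v_nonneg by simp
  have "discount \<delta> (h - {{i, j}}) i b \<le> discount \<delta> (g - {{i, j}}) i b"
    "discount \<delta> (g - {{i, j}}) i b \<le> discount \<delta> g i b"
    "discount \<delta> (h - {{i, j}}) i b \<le> discount \<delta> (insert {i, j} h) i b"
    using hg by (auto intro: discount_mono[OF \<delta>])
  moreover have "insert {i, j} g = g" using e by blast
  moreover have "discount \<delta> g i b \<le> discount \<delta> (insert {i, j} h) i b \<or>
      discount \<delta> g i b \<le> discount \<delta> (g - {{i, j}}) i b"
    using attained b by simp
  ultimately show "discount \<delta> (insert {i, j} g) i b - discount \<delta> (g - {{i, j}}) i b
      \<le> discount \<delta> (insert {i, j} h) i b - discount \<delta> (h - {{i, j}}) i b"
    by (elim disjE) simp_all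
qed

end

section \<open>The dynamics under incomplete information\<close>

definition valuation :: "('x \<Rightarrow> real) \<Rightarrow> (nat \<Rightarrow> 'x) \<Rightarrow> real \<Rightarrow> (nat \<Rightarrow> nat \<Rightarrow> bool) \<Rightarrow> nat \<Rightarrow> nat \<Rightarrow> real" where
  "valuation f k Ef K a b = (if K a b then f (k b) else Ef)"

lemma step_IC_eq:
  "step_IC N \<delta> c f k Ef (h, K) (i, j) =
     (decide N \<delta> c (valuation f k Ef K) h i j,
      \<lambda>a b. K a b \<or> conn (decide N \<delta> c (valuation f k Ef K) h i j) a b)"
  by (simp add: step_IC_def Let_def valuation_def[abs_def])

lemma run_IC_Nil [simp]: "run_IC N \<delta> c f k Ef s [] = s"
  by (simp add: run_IC_def)

lemma run_IC_Cons [simp]: "run_IC N \<delta> c f k Ef s (x # p) = run_IC N \<delta> c f k Ef (step_IC N \<delta> c f k Ef s x) p"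
  by (simp add: run_IC_def)

lemma run_IC_append: "run_IC N \<delta> c f k Ef s (p @ q) = run_IC N \<delta> c f k Ef (run_IC N \<delta> c f k Ef s p) q"
  by (simp add: run_IC_def)

lemma run_IC_knowledge_mono: "snd s a b \<Longrightarrow> snd (run_IC N \<delta> c f k Ef s p) a b"
proof (induction p arbitrary: s)
  case (Cons x p)
  then show ?case by (cases s, cases x) (simp add: step_IC_eq)
qed simp

lemma valid_path_Nil [simp]: "valid_path N []"
  by (simp add: valid_path_def)

lemma valid_path_Cons [simp]: "valid_path N ((i, j) # p) \<longleftrightarrow> i < N \<and> j < N \<and> i \<noteq> j \<and> valid_path N p"
  by (auto simp: valid_path_def)

lemma valid_path_append [simp]: "valid_path N (p @ q) \<longleftrightarrow> valid_path N p \<and> valid_path N q"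
  by (auto simp: valid_path_def)

definition links :: "(nat \<times> nat) list \<Rightarrow> nat set set" where
  "links p = (\<lambda>(i, j). {i, j}) ` set p"

lemma links_Nil [simp]: "links [] = {}"
  and links_Cons [simp]: "links ((i, j) # p) = insert {i, j} (links p)"
  and links_append [simp]: "links (p @ q) = links p \<union> links q"
  by (auto simp: links_def)

fun joining_path :: "nat \<Rightarrow> nat set set \<Rightarrow> (nat \<times> nat) list \<Rightarrow> bool" where
  "joining_path N h [] = True"
| "joining_path N h ((i, j) # p) \<longleftrightarrow>
     i < N \<and> j < N \<and> i \<noteq> j \<and> \<not> conn h i j \<and> joining_path N (insert {i, j} h) p"

lemma joining_path_valid: "joining_path N h p \<Longrightarrow> valid_path N p"
  by (induction N h p rule: joining_path.induct) auto

lemma joining_path_append: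
  "joining_path N h (p @ q) \<longleftrightarrow> joining_path N h p \<and> joining_path N (h \<union> links p) q"
  by (induction N h p rule: joining_path.induct) auto

definition acquainted_iff_conn :: "nat set set \<Rightarrow> (nat \<Rightarrow> nat \<Rightarrow> bool) \<Rightarrow> bool" where
  "acquainted_iff_conn h K \<longleftrightarrow> (\<forall>a b. a \<noteq> b \<longrightarrow> K a b = conn h a b)"

definition fully_informed :: "nat \<Rightarrow> (nat \<Rightarrow> nat \<Rightarrow> bool) \<Rightarrow> bool" where
  "fully_informed N K \<longleftrightarrow> (\<forall>a<N. \<forall>b<N. a \<noteq> b \<longrightarrow> K a b)"

lemma acquainted_iff_conn_empty: "acquainted_iff_conn {} (\<lambda>_ _. False)"
  by (simp add: acquainted_iff_conn_def)

lemma fully_informed_if_connected: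
  "acquainted_iff_conn h K \<Longrightarrow> connected N h \<Longrightarrow> fully_informed N K"
  unfolding acquainted_iff_conn_def connected_def fully_informed_def by blast

context
  fixes N :: nat and \<delta> c Ef :: real and f :: "'x \<Rightarrow> real" and k :: "nat \<Rightarrow> 'x"
  assumes \<delta>: "0 \<le> \<delta>" "\<delta> \<le> 1" and f_nonneg: "\<And>b. b < N \<Longrightarrow> 0 \<le> f (k b)"
    and Ef: "0 \<le> c" "c \<le> Ef"
begin

lemma valuation_nonneg: "b < N \<Longrightarrow> 0 \<le> valuation f k Ef K a b"
  using f_nonneg[of b] Ef by (simp add: valuation_def)

text \<open>Strangers value each other at \<open>E[f] \<ge> c\<close>.\<close>
lemma decide_unconnected:
  assumes ij: "i < N" "j < N" "i \<noteq> j" and unconn: "\<not> conn h i j" and strangers: "\<not> K i j" "\<not> K j i"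
  shows "decide N \<delta> c (valuation f k Ef K) h i j = insert {i, j} h"
proof (rule decide_eq_insert)
  have unconn': "\<not> conn h j i" using unconn conn_sym by blast
  have "c \<le> valuation f k Ef K i j" "c \<le> valuation f k Ef K j i"
    using strangers Ef by (simp_all add: valuation_def)
  then show "agrees N \<delta> c (valuation f k Ef K i) h i j" "agrees N \<delta> c (valuation f k Ef K j) h j i"
    using agrees_unconnected[OF \<delta>] ij unconn unconn' valuation_nonneg by metis+
qed

lemma run_IC_joining_path:
  assumes "joining_path N h p" and "acquainted_iff_conn h K"
  shows "\<exists>K'. run_IC N \<delta> c f k Ef (h, K) p = (h \<union> links p, K') \<and> acquainted_iff_conn (h \<union> links p) K'"
  using assms
proof (induction p arbitrary: h K)
  case (Cons x p)
  obtain i j where x: "x = (i, j)" by fastforce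
  let ?h' = "insert {i, j} h"
  have ij: "i < N" "j < N" "i \<noteq> j" "\<not> conn h i j" and p: "joining_path N ?h' p"
    using Cons.prems(1) x by auto
  have "K i j = conn h i j" "K j i = conn h j i"
    using Cons.prems(2) ij(3) unfolding acquainted_iff_conn_def by auto
  then have "\<not> K i j" "\<not> K j i" using ij(4) conn_sym[of h j i] by auto
  then have "step_IC N \<delta> c f k Ef (h, K) (i, j) = (?h', \<lambda>a b. K a b \<or> conn ?h' a b)"
    using decide_unconnected[OF ij] by (simp add: step_IC_eq)
  moreover have "acquainted_iff_conn ?h' (\<lambda>a b. K a b \<or> conn ?h' a b)"
    using Cons.prems(2) conn_mono[of h _ _ ?h'] unfolding acquainted_iff_conn_def by blast
  ultimately show ?case using Cons.IH[OF p] x by auto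
qed simp

end

definition run_CI :: "nat \<Rightarrow> real \<Rightarrow> real \<Rightarrow> ('x \<Rightarrow> real) \<Rightarrow> (nat \<Rightarrow> 'x) \<Rightarrow> nat set set
                       \<Rightarrow> (nat \<times> nat) list \<Rightarrow> nat set set" where
  "run_CI N \<delta> c f k = foldl (\<lambda>h (i, j). decide N \<delta> c (\<lambda>_ b. f (k b)) h i j)"

lemma run_CI_Nil [simp]: "run_CI N \<delta> c f k h [] = h"
  and run_CI_Cons [simp]: "run_CI N \<delta> c f k h ((i, j) # p) = run_CI N \<delta> c f k (decide N \<delta> c (\<lambda>_ b. f (k b)) h i j) p"
  by (simp_all add: run_CI_def)

lemma run_IC_fully_informed:
  assumes "fully_informed N K" and "valid_path N p"
  shows "\<exists>K'. run_IC N \<delta> c f k Ef (h, K) p = (run_CI N \<delta> c f k h p, K') \<and> fully_informed N K'"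
  using assms
proof (induction p arbitrary: h K)
  case (Cons x p)
  obtain i j where x: "x = (i, j)" by fastforce
  have ij: "i < N" "j < N" "i \<noteq> j" and p: "valid_path N p" using Cons.prems(2) x by auto
  have "decide N \<delta> c (valuation f k Ef K) h i j = decide N \<delta> c (\<lambda>_ b. f (k b)) h i j"
    by (rule decide_cong) (use Cons.prems(1) ij in \<open>auto simp: fully_informed_def valuation_def\<close>)
  moreover have "fully_informed N (\<lambda>a b. K a b \<or> conn h' a b)" for h'
    using Cons.prems(1) unfolding fully_informed_def by blast
  ultimately show ?case using Cons.IH[OF _ p] x by (simp add: step_IC_eq)
qed simp

lemma run_CI_stable:
  assumes "stable_CI N \<delta> c f k g" and "valid_path N p"
  shows "run_CI N \<delta> c f k g p = g"
  using assms(2)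
proof (induction p)
  case (Cons x p)
  obtain i j where "x = (i, j)" by fastforce
  with Cons assms(1) show ?case unfolding stable_CI_def by simp
qed simp

lemma run_CI_adding_links:
  assumes "\<forall>(i, j)\<in>set p. {i, j} \<in> g \<and>
      (\<forall>h. P \<subseteq> h \<longrightarrow> h \<subseteq> g \<longrightarrow> decide N \<delta> c (\<lambda>_ b. f (k b)) h i j = insert {i, j} h)"
    and "P \<subseteq> h" "h \<subseteq> g"
  shows "run_CI N \<delta> c f k h p = h \<union> links p"
  using assms
proof (induction p arbitrary: h)
  case (Cons x p)
  obtain i j where x: "x = (i, j)" by fastforce
  with Cons.prems have "decide N \<delta> c (\<lambda>_ b. f (k b)) h i j = insert {i, j} h" "insert {i, j} h \<subseteq> g"
    by auto
  moreover have "run_CI N \<delta> c f k (insert {i, j} h) p = insert {i, j} h \<union> links p"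
    by (rule Cons.IH) (use Cons.prems x \<open>insert {i, j} h \<subseteq> g\<close> in auto)
  ultimately show ?case using x by simp
qed simp

lemma G_IC_intro:
  assumes "stable_CI N \<delta> c f k g" and "valid_path N p"
    and "run_IC N \<delta> c f k Ef init_state p = (g, K)" and "fully_informed N K"
  shows "g \<in> G_IC N \<delta> c f k Ef"
proof -
  have "fst (run_IC N \<delta> c f k Ef (g, K) q) = g" if q: "valid_path N q" for q
  proof -
    obtain K' where "run_IC N \<delta> c f k Ef (g, K) q = (run_CI N \<delta> c f k g q, K')"
      using run_IC_fully_informed[OF assms(4) q] by blast
    then show ?thesis using run_CI_stable[OF assms(1) q] by simp
  qed
  then have "stable_IC N \<delta> c f k Ef (run_IC N \<delta> c f k Ef init_state p)"
    unfolding stable_IC_def assms(3) by simp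
  then show ?thesis unfolding G_IC_def using assms(2,3) by (intro CollectI exI[of _ p]) simp
qed

lemma G_IC_by_spanning_path:
  assumes \<delta>: "0 \<le> \<delta>" "\<delta> \<le> 1" and f_nonneg: "\<And>b. b < N \<Longrightarrow> 0 \<le> f (k b)" and Ef: "0 \<le> c" "c \<le> Ef"
    and stable: "stable_CI N \<delta> c f k g"
    and join: "joining_path N {} p" and span: "connected N (links p)"
    and rest: "valid_path N q"
      "\<forall>(i, j)\<in>set q. {i, j} \<in> g \<and>
        (\<forall>h. links p \<subseteq> h \<longrightarrow> h \<subseteq> g \<longrightarrow> decide N \<delta> c (\<lambda>_ b. f (k b)) h i j = insert {i, j} h)"
    and g: "g = links p \<union> links q"
  shows "g \<in> G_IC N \<delta> c f k Ef"
proof -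
  obtain K where K: "run_IC N \<delta> c f k Ef init_state p = (links p, K)" "acquainted_iff_conn (links p) K"
    using run_IC_joining_path[where N=N and \<delta>=\<delta> and c=c and Ef=Ef and f=f and k=k,
        OF \<delta> f_nonneg Ef join acquainted_iff_conn_empty]
    by (auto simp: init_state_def)
  obtain K' where "run_IC N \<delta> c f k Ef (links p, K) q = (run_CI N \<delta> c f k (links p) q, K')"
    and K': "fully_informed N K'"
    using run_IC_fully_informed[OF fully_informed_if_connected[OF K(2) span] rest(1)] by blast
  moreover have "run_CI N \<delta> c f k (links p) q = g"
    using run_CI_adding_links[where f=f and k=k, OF rest(2), of "links p"] g by blast
  ultimately have "run_IC N \<delta> c f k Ef init_state (p @ q) = (g, K')"
    using K(1) by (simp add: run_IC_append)
  moreover have "valid_path N (p @ q)" using joining_path_valid[OF join] rest(1) by simp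
  ultimately show ?thesis using G_IC_intro[OF stable _ _ K'] by blast
qed

lemma joining_path_fresh_ends:
  fixes ms :: "nat list"
  assumes "sorted_wrt (<) ms"
    and "\<forall>m\<in>set ms. A m < N \<and> B m < N \<and> isolated h (B m)"
    and "inj_on B (set ms)"
    and "\<forall>m\<in>set ms. \<forall>m'\<in>set ms. m \<le> m' \<longrightarrow> A m \<noteq> B m'"
  shows "joining_path N h (map (\<lambda>m. (A m, B m)) ms)"
  using assms
proof (induction ms arbitrary: h)
  case (Cons m ms)
  have "A m \<noteq> B m" and "isolated h (B m)" using Cons.prems(2,4) by auto
  then have "\<not> conn h (A m) (B m)" using isolated_conn by blast
  moreover have "joining_path N (insert {A m, B m} h) (map (\<lambda>m. (A m, B m)) ms)"
  proof (rule Cons.IH)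
    have "B m' \<noteq> B m" "B m' \<noteq> A m" if "m' \<in> set ms" for m'
      using that Cons.prems(1,3,4) by (auto simp: inj_on_def less_imp_le)
    then show "\<forall>m'\<in>set ms. A m' < N \<and> B m' < N \<and> isolated (insert {A m, B m} h) (B m')"
      using Cons.prems(2) by (auto simp: isolated_insert)
  qed (use Cons.prems in \<open>auto simp: inj_on_def\<close>)
  ultimately show ?case using Cons.prems(2) \<open>A m \<noteq> B m\<close> by simp
qed simp

section \<open>Core-periphery networks\<close>

definition core_periphery_with :: "nat \<Rightarrow> nat set \<Rightarrow> (nat \<Rightarrow> nat) \<Rightarrow> nat set set \<Rightarrow> bool" where
  "core_periphery_with N C hub g \<longleftrightarrow>
     C \<subseteq> {..<N} \<and> C \<noteq> {} \<and> (\<forall>p<N. p \<notin> C \<longrightarrow> hub p \<in> C) \<and>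
     g = {{a, b} | a b. a \<in> C \<and> b \<in> C \<and> a \<noteq> b} \<union> {{hub p, p} | p. p < N \<and> p \<notin> C}"

definition core_spanning_path :: "nat \<Rightarrow> nat set \<Rightarrow> (nat \<Rightarrow> nat) \<Rightarrow> nat \<Rightarrow> (nat \<times> nat) list" where
  "core_spanning_path N C hub c0 =
     map (\<lambda>x. (c0, x)) (filter (\<lambda>x. x \<in> C \<and> x \<noteq> c0) [0..<N]) @
     map (\<lambda>p. (hub p, p)) (filter (\<lambda>p. p \<notin> C) [0..<N])"

definition core_pairs :: "nat \<Rightarrow> nat set \<Rightarrow> (nat \<times> nat) list" where
  "core_pairs N C = filter (\<lambda>(a, b). a < b) (List.product (filter (\<lambda>x. x \<in> C) [0..<N]) (filter (\<lambda>x. x \<in> C) [0..<N]))"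

context
  fixes N :: nat and C :: "nat set" and hub :: "nat \<Rightarrow> nat" and g :: "nat set set"
  assumes cp: "core_periphery_with N C hub g"
begin

lemma core_subset: "C \<subseteq> {..<N}"
  and core_nonempty: "C \<noteq> {}"
  and hub_in_core: "p < N \<Longrightarrow> p \<notin> C \<Longrightarrow> hub p \<in> C"
  and core_periphery_eq: "g = {{a, b} | a b. a \<in> C \<and> b \<in> C \<and> a \<noteq> b} \<union> {{hub p, p} | p. p < N \<and> p \<notin> C}"
  using cp unfolding core_periphery_with_def by auto

lemma core_link: "a \<in> C \<Longrightarrow> b \<in> C \<Longrightarrow> a \<noteq> b \<Longrightarrow> {a, b} \<in> g"
  using core_periphery_eq by blast

lemma periphery_link: "p < N \<Longrightarrow> p \<notin> C \<Longrightarrow> {hub p, p} \<in> g"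
  using core_periphery_eq by blast

lemma no_link_to_periphery: "a \<in> C \<Longrightarrow> p \<notin> C \<Longrightarrow> hub p \<noteq> a \<Longrightarrow> {a, p} \<notin> g"
  using core_periphery_eq by (auto simp: doubleton_eq_iff)

text \<open>From a core agent \<open>a\<close>, every agent is at distance at most two in \<open>g\<close>, and the only agents
  that the core link \<open>ab\<close> brings closer are the peripheral agents of \<open>b\<close>, whose links are present
  in \<open>h\<close>.\<close>
lemma core_discount_attained:
  assumes \<delta>: "0 \<le> \<delta>" "\<delta> \<le> 1" and ab: "a \<in> C" "b \<in> C" "a \<noteq> b"
    and per: "{{hub p, p} | p. p < N \<and> p \<notin> C} \<subseteq> h" and x: "x < N" "x \<noteq> a"
  shows "discount \<delta> g a x \<le> discount \<delta> (insert {a, b} h) a x \<or>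
         discount \<delta> g a x \<le> discount \<delta> (g - {{a, b}}) a x"
proof -
  have le_1: "discount \<delta> g a x \<le> 1" using discount_le_1[OF \<delta>] x(2) by simp
  consider "x = b" | "x \<in> C" "x \<noteq> b" | "x \<notin> C" "hub x = a" | "x \<notin> C" "hub x = b"
    | "x \<notin> C" "hub x \<noteq> a" "hub x \<noteq> b" by blast
  then show ?thesis
  proof cases
    case 1
    then have "1 \<le> discount \<delta> (insert {a, b} h) a x" by (intro discount_link[OF \<delta>]) simp
    then show ?thesis using le_1 by simp
  next
    case 2
    then have "{a, x} \<in> g - {{a, b}}" using core_link[of a x] ab x(2) by (auto simp: doubleton_eq_iff)
    then have "1 \<le> discount \<delta> (g - {{a, b}}) a x" by (rule discount_link[OF \<delta>])
    then show ?thesis using le_1 by simp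
  next
    case 3
    then have "{a, x} \<in> g - {{a, b}}" using periphery_link[OF x(1)] ab by (auto simp: doubleton_eq_iff)
    then have "1 \<le> discount \<delta> (g - {{a, b}}) a x" by (rule discount_link[OF \<delta>])
    then show ?thesis using le_1 by simp
  next
    case 4
    then have "{b, x} \<in> h" using per x(1) by blast
    then have "\<delta> \<le> discount \<delta> (insert {a, b} h) a x" by (intro discount_two_links[OF \<delta>]) auto
    moreover have "discount \<delta> g a x \<le> \<delta>"
      using 4 ab(1,3) no_link_to_periphery[OF ab(1) \<open>x \<notin> C\<close>] x(2) by (intro discount_le_delta[OF \<delta>]) auto
    ultimately show ?thesis by simp
  next
    case 5
    then have "{a, hub x} \<in> g - {{a, b}}" "{hub x, x} \<in> g - {{a, b}}"
      using core_link[OF ab(1) hub_in_core[OF x(1)]] periphery_link[OF x(1)] ab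
      by (auto simp: doubleton_eq_iff)
    then have "\<delta> \<le> discount \<delta> (g - {{a, b}}) a x" by (rule discount_two_links[OF \<delta>])
    moreover have "discount \<delta> g a x \<le> \<delta>"
      using 5 no_link_to_periphery[OF ab(1) \<open>x \<notin> C\<close>] x(2) by (intro discount_le_delta[OF \<delta>]) auto
    ultimately show ?thesis by simp
  qed
qed

lemma core_link_agreed:
  assumes \<delta>: "0 \<le> \<delta>" "\<delta> \<le> 1" and f_nonneg: "\<And>b. b < N \<Longrightarrow> 0 \<le> f (k b)"
    and stable: "stable_CI N \<delta> c f k g" and ab: "a \<in> C" "b \<in> C" "a \<noteq> b"
    and per: "{{hub p, p} | p. p < N \<and> p \<notin> C} \<subseteq> h" and hg: "h \<subseteq> g"
  shows "agrees N \<delta> c (\<lambda>b. f (k b)) h a b"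
proof -
  have N: "a < N" "b < N" using ab core_subset by auto
  have "c \<le> marginal_gain N \<delta> (\<lambda>b. f (k b)) g a b"
    using stable_CI_agrees[OF stable core_link[OF ab] N ab(3)] agrees_iff_marginal_gain[OF ab(3) N(2)]
    by simp
  also have "\<dots> \<le> marginal_gain N \<delta> (\<lambda>b. f (k b)) h a b"
    using core_discount_attained[OF \<delta> ab per] f_nonneg
    by (intro marginal_gain_subnetwork[OF \<delta> hg core_link[OF ab]]) auto
  finally show ?thesis using agrees_iff_marginal_gain[OF ab(3) N(2)] by simp
qed

lemma links_core_spanning_path:
  assumes "c0 \<in> C"
  shows "links (core_spanning_path N C hub c0) =
    {{c0, x} | x. x \<in> C \<and> x \<noteq> c0} \<union> {{hub p, p} | p. p < N \<and> p \<notin> C}"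
  using core_subset unfolding core_spanning_path_def links_def by auto

lemma joining_path_core_spanning_path:
  assumes c0: "c0 \<in> C"
  shows "joining_path N {} (core_spanning_path N C hub c0)"
proof -
  let ?L = "filter (\<lambda>x. x \<in> C \<and> x \<noteq> c0) [0..<N]" and ?Q = "filter (\<lambda>p. p \<notin> C) [0..<N]"
  have star: "joining_path N {} (map (\<lambda>x. (c0, x)) ?L)"
  proof (rule joining_path_fresh_ends)
    show "\<forall>m\<in>set ?L. c0 < N \<and> m < N \<and> isolated {} m"
      using c0 core_subset by (auto simp: isolated_def)
  qed (auto intro: sorted_wrt_filter)
  have "joining_path N (links (map (\<lambda>x. (c0, x)) ?L)) (map (\<lambda>p. (hub p, p)) ?Q)"
  proof (rule joining_path_fresh_ends)
    show "\<forall>p\<in>set ?Q. hub p < N \<and> p < N \<and> isolated (links (map (\<lambda>x. (c0, x)) ?L)) p"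
      using hub_in_core core_subset c0 by (auto simp: links_def isolated_def)
    show "\<forall>p\<in>set ?Q. \<forall>p'\<in>set ?Q. p \<le> p' \<longrightarrow> hub p \<noteq> p'"
      using hub_in_core by fastforce
  qed (auto intro: sorted_wrt_filter)
  with star show ?thesis unfolding core_spanning_path_def by (simp add: joining_path_append)
qed

lemma connected_core_spanning_path:
  assumes c0: "c0 \<in> C"
  shows "connected N (links (core_spanning_path N C hub c0))"
proof (rule connectedI_from)
  let ?h = "links (core_spanning_path N C hub c0)"
  have to_core: "conn ?h c0 y" if "y \<in> C" for y
  proof (cases "y = c0")
    case False
    then have "{c0, y} \<in> ?h" using that links_core_spanning_path[OF c0] by auto
    then show ?thesis by (rule conn_edge)
  qed simp
  fix x assume x: "x < N"
  show "conn ?h c0 x"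
  proof (cases "x \<in> C")
    case False
    then have "{hub x, x} \<in> ?h" using x links_core_spanning_path[OF c0] by auto
    then show ?thesis by (rule conn_trans[OF to_core[OF hub_in_core[OF x False]] conn_edge])
  qed (rule to_core)
qed

lemma links_core_pairs: "links (core_pairs N C) = {{a, b} | a b. a \<in> C \<and> b \<in> C \<and> a \<noteq> b}"
  using core_subset unfolding core_pairs_def links_def by (auto simp: insert_commute elim!: neqE)

lemma G_IC_core_periphery:
  assumes \<delta>: "0 \<le> \<delta>" "\<delta> \<le> 1" and f_nonneg: "\<And>b. b < N \<Longrightarrow> 0 \<le> f (k b)" and Ef: "0 \<le> c" "c \<le> Ef"
    and stable: "stable_CI N \<delta> c f k g"
  shows "g \<in> G_IC N \<delta> c f k Ef"
proof -
  obtain c0 where c0: "c0 \<in> C" using core_nonempty by blast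
  let ?p = "core_spanning_path N C hub c0"
  have valid: "valid_path N (core_pairs N C)" by (auto simp: core_pairs_def valid_path_def)
  have "{a, b} \<in> g \<and> (\<forall>h. links ?p \<subseteq> h \<longrightarrow> h \<subseteq> g \<longrightarrow>
      decide N \<delta> c (\<lambda>_ b. f (k b)) h a b = insert {a, b} h)" if "(a, b) \<in> set (core_pairs N C)" for a b
  proof -
    have ab: "a \<in> C" "b \<in> C" "a \<noteq> b" using that by (auto simp: core_pairs_def)
    have "decide N \<delta> c (\<lambda>_ b. f (k b)) h a b = insert {a, b} h" if h: "links ?p \<subseteq> h" "h \<subseteq> g" for h
    proof (rule decide_eq_insert)
      have per: "{{hub p, p} | p. p < N \<and> p \<notin> C} \<subseteq> h" using h links_core_spanning_path[OF c0] by auto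
      show "agrees N \<delta> c (\<lambda>b. f (k b)) h a b"
        by (rule core_link_agreed[OF \<delta> f_nonneg stable ab per h(2)])
      show "agrees N \<delta> c (\<lambda>b. f (k b)) h b a"
        by (rule core_link_agreed[OF \<delta> f_nonneg stable ab(2,1) ab(3)[symmetric] per h(2)])
    qed
    then show ?thesis using core_link[OF ab] by blast
  qed
  then have adding: "\<forall>(a, b)\<in>set (core_pairs N C). {a, b} \<in> g \<and> (\<forall>h. links ?p \<subseteq> h \<longrightarrow> h \<subseteq> g \<longrightarrow>
      decide N \<delta> c (\<lambda>_ b. f (k b)) h a b = insert {a, b} h)" by blast
  have "{{c0, x} | x. x \<in> C \<and> x \<noteq> c0} \<subseteq> {{a, b} | a b. a \<in> C \<and> b \<in> C \<and> a \<noteq> b}"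
    using c0 by blast
  then have g_eq: "g = links ?p \<union> links (core_pairs N C)"
    unfolding links_core_spanning_path[OF c0] links_core_pairs core_periphery_eq by blast
  show ?thesis
    by (rule G_IC_by_spanning_path[OF \<delta> f_nonneg Ef stable joining_path_core_spanning_path[OF c0]
        connected_core_spanning_path[OF c0] valid adding]) (simp_all add: g_eq)
qed

end

lemma core_periphery_with_complete:
  assumes "0 < N" "network N g" "is_complete N g"
  shows "core_periphery_with N {..<N} hub g"
proof -
  have "g = {{a, b} | a b. a \<in> {..<N} \<and> b \<in> {..<N} \<and> a \<noteq> b}"
  proof (intro equalityI subsetI)
    fix e assume "e \<in> g"
    then show "e \<in> {{a, b} | a b. a \<in> {..<N} \<and> b \<in> {..<N} \<and> a \<noteq> b}"
      using assms(2) unfolding network_def by blast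
  qed (use assms(3) in \<open>auto simp: is_complete_def\<close>)
  moreover have "0 \<in> {..<N}" using assms(1) by simp
  ultimately show ?thesis unfolding core_periphery_with_def by blast
qed

lemma core_periphery_with_star:
  assumes "is_star N g"
  obtains i where "core_periphery_with N {i} (\<lambda>_. i) g"
proof -
  obtain i where "i < N" "g = {{i, j} | j. j < N \<and> j \<noteq> i}" using assms unfolding is_star_def by blast
  moreover have "{{a, b} | a b. a \<in> {i} \<and> b \<in> {i} \<and> a \<noteq> b} = {}" by blast
  ultimately have "core_periphery_with N {i} (\<lambda>_. i) g" unfolding core_periphery_with_def by auto
  then show ?thesis by (rule that)
qed

lemma is_core_periphery_hub:
  assumes "is_core_periphery N g"
  obtains C hub where "C \<noteq> {}" "C \<subset> {..<N}" "\<forall>a\<in>C. \<forall>b\<in>C. a \<noteq> b \<longrightarrow> {a, b} \<in> g"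
    and "\<And>p. p < N \<Longrightarrow> p \<notin> C \<Longrightarrow> {a\<in>C. {a, p} \<in> g} = {hub p}"
    and "\<And>p b. p < N \<Longrightarrow> p \<notin> C \<Longrightarrow> b \<notin> C \<Longrightarrow> {p, b} \<notin> g"
proof -
  obtain C where C: "C \<noteq> {}" "C \<subset> {..<N}" "\<forall>a\<in>C. \<forall>b\<in>C. a \<noteq> b \<longrightarrow> {a, b} \<in> g"
    and per: "\<forall>p\<in>{..<N} - C. card {a\<in>C. {a, p} \<in> g} = 1 \<and> (\<forall>b. b \<notin> C \<longrightarrow> {p, b} \<notin> g)"
    using assms unfolding is_core_periphery_def by blast
  define hub where "hub p = (THE a. a \<in> C \<and> {a, p} \<in> g)" for p
  have hub: "{a\<in>C. {a, p} \<in> g} = {hub p}" if p: "p < N" "p \<notin> C" for p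
  proof -
    have "card {a\<in>C. {a, p} \<in> g} = 1" using per p by simp
    then obtain a where a: "{a\<in>C. {a, p} \<in> g} = {a}" by (rule card_1_singletonE)
    then have "hub p = a" unfolding hub_def by (rule_tac the_equality) auto
    with a show ?thesis by simp
  qed
  have "{p, b} \<notin> g" if "p < N" "p \<notin> C" "b \<notin> C" for p b
    using per that by blast
  with C hub show ?thesis by (rule that)
qed

lemma core_periphery_with_core_periphery:
  assumes net: "network N g" and cp: "is_core_periphery N g"
  obtains C hub where "core_periphery_with N C hub g"
proof -
  obtain C hub where C: "C \<noteq> {}" "C \<subset> {..<N}" "\<forall>a\<in>C. \<forall>b\<in>C. a \<noteq> b \<longrightarrow> {a, b} \<in> g"
    and hub: "\<And>p. p < N \<Longrightarrow> p \<notin> C \<Longrightarrow> {a\<in>C. {a, p} \<in> g} = {hub p}"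
    and no_link: "\<And>p b. p < N \<Longrightarrow> p \<notin> C \<Longrightarrow> b \<notin> C \<Longrightarrow> {p, b} \<notin> g"
    using is_core_periphery_hub[OF cp] by blast
  have "g = {{a, b} | a b. a \<in> C \<and> b \<in> C \<and> a \<noteq> b} \<union> {{hub p, p} | p. p < N \<and> p \<notin> C}"
  proof (intro equalityI subsetI)
    fix e assume e: "e \<in> g"
    then obtain x y where xy: "x < N" "y < N" "x \<noteq> y" "e = {x, y}"
      using net unfolding network_def by blast
    with e have link: "{x, y} \<in> g" "{y, x} \<in> g" by (simp_all add: insert_commute)
    then consider "x \<in> C" "y \<in> C" | "x \<in> C" "y \<notin> C" | "x \<notin> C" "y \<in> C"
      using no_link[of x y] xy(1) by blast
    then show "e \<in> {{a, b} | a b. a \<in> C \<and> b \<in> C \<and> a \<noteq> b} \<union> {{hub p, p} | p. p < N \<and> p \<notin> C}"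
    proof cases
      case 2
      then have "x = hub y" using hub[of y] xy link by blast
      then show ?thesis using xy 2 by blast
    next
      case 3
      then have "y = hub x" using hub[of x] xy link by blast
      then have "e = {hub x, x}" using xy by (simp add: insert_commute)
      then show ?thesis using xy 3 by blast
    qed (use xy in blast)
  next
    fix e assume "e \<in> {{a, b} | a b. a \<in> C \<and> b \<in> C \<and> a \<noteq> b} \<union> {{hub p, p} | p. p < N \<and> p \<notin> C}"
    moreover have "{hub p, p} \<in> g" if "p < N" "p \<notin> C" for p using hub[OF that] by blast
    ultimately show "e \<in> g" using C(3) by blast
  qed
  moreover have "hub p \<in> C" if "p < N" "p \<notin> C" for p using hub[OF that] by blast
  ultimately have "core_periphery_with N C hub g"
    using C(1,2) unfolding core_periphery_with_def by (simp add: psubset_imp_subset)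
  then show ?thesis by (rule that)
qed

lemma core_periphery_with_if_class:
  assumes "0 < N" and "network N g" and "is_star N g \<or> is_complete N g \<or> is_core_periphery N g"
  obtains C hub where "core_periphery_with N C hub g"
  using assms(3)
proof (elim disjE)
  assume "is_star N g"
  then show ?thesis by (rule core_periphery_with_star) (rule that)
next
  assume "is_complete N g"
  then show ?thesis by (rule that[OF core_periphery_with_complete[OF assms(1,2)]])
next
  assume "is_core_periphery N g"
  then show ?thesis by (rule core_periphery_with_core_periphery[OF assms(2)]) (rule that)
qed

section \<open>Trees\<close>

lemma tree_link_not_conn_Diff:
  assumes tree: "is_tree N g" and e: "{i, j} \<in> g"
  shows "\<not> conn (g - {{i, j}}) i j"
proof
  assume ij: "conn (g - {{i, j}}) i j"
  have "conn g a b" if "a < N" "b < N" for a b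
    using tree that unfolding is_tree_def by blast
  then have "\<forall>a b. a < N \<longrightarrow> b < N \<longrightarrow> conn (g - {{i, j}}) a b"
    using conn_Diff_link[OF ij] by blast
  moreover have "\<not> (\<forall>a b. a < N \<longrightarrow> b < N \<longrightarrow> conn (g - {{i, j}}) a b)"
    using tree e unfolding is_tree_def by blast
  ultimately show False by contradiction
qed

lemma joining_path_tree:
  assumes tree: "is_tree N g"
    and pr: "\<forall>e\<in>g. fst (pr e) < N \<and> snd (pr e) < N \<and> fst (pr e) \<noteq> snd (pr e) \<and> e = {fst (pr e), snd (pr e)}"
  shows "distinct es \<Longrightarrow> set es \<subseteq> g \<Longrightarrow> h \<subseteq> g \<Longrightarrow> h \<inter> set es = {} \<Longrightarrow> joining_path N h (map pr es)"
proof (induction es arbitrary: h)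
  case (Cons e es)
  obtain i j where ij: "pr e = (i, j)" by fastforce
  have e: "e \<in> g" "i < N" "j < N" "i \<noteq> j" "e = {i, j}" using Cons.prems(2) pr ij by auto
  have "\<not> conn h i j"
  proof
    assume "conn h i j"
    moreover have "h \<subseteq> g - {{i, j}}" using Cons.prems(3,4) e(5) by auto
    ultimately have "conn (g - {{i, j}}) i j" by (rule conn_mono)
    then show False using tree_link_not_conn_Diff[OF tree] e by simp
  qed
  moreover have "joining_path N (insert {i, j} h) (map pr es)"
    using Cons.prems e(5) by (intro Cons.IH) auto
  ultimately show ?case using e ij by simp
qed simp

lemma G_IC_tree:
  assumes \<delta>: "0 \<le> \<delta>" "\<delta> \<le> 1" and f_nonneg: "\<And>b. b < N \<Longrightarrow> 0 \<le> f (k b)" and Ef: "0 \<le> c" "c \<le> Ef"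
    and net: "network N g" and tree: "is_tree N g" and stable: "stable_CI N \<delta> c f k g"
  shows "g \<in> G_IC N \<delta> c f k Ef"
proof -
  have "g \<subseteq> Pow {..<N}" using net unfolding network_def by auto
  then have "finite g" by (rule finite_subset) simp
  then obtain es where es: "distinct es" "set es = g" using finite_distinct_list by blast
  have "\<forall>e\<in>g. \<exists>p. fst p < N \<and> snd p < N \<and> fst p \<noteq> snd p \<and> e = {fst p, snd p}"
  proof
    fix e assume "e \<in> g"
    then obtain i j where "i < N" "j < N" "i \<noteq> j" "e = {i, j}" using net unfolding network_def by blast
    then show "\<exists>p. fst p < N \<and> snd p < N \<and> fst p \<noteq> snd p \<and> e = {fst p, snd p}" by (intro exI[of _ "(i, j)"]) simp
  qed
  then obtain pr where pr: "\<forall>e\<in>g. fst (pr e) < N \<and> snd (pr e) < N \<and> fst (pr e) \<noteq> snd (pr e) \<and> e = {fst (pr e), snd (pr e)}"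
    by (rule bchoice[THEN exE])
  have "((\<lambda>(i, j). {i, j}) \<circ> pr) ` g = (\<lambda>e. e) ` g"
    by (rule image_cong) (use pr in \<open>auto simp: case_prod_beta\<close>)
  then have links: "links (map pr es) = g" unfolding links_def es(2)[symmetric] by (simp add: image_comp)
  have join: "joining_path N {} (map pr es)"
    by (rule joining_path_tree[OF tree pr es(1)]) (use es(2) in auto)
  have "connected N g" using tree unfolding is_tree_def connected_def by blast
  then have span: "connected N (links (map pr es))" by (simp only: links)
  show ?thesis by (rule G_IC_by_spanning_path[where q="[]", OF \<delta> f_nonneg Ef stable join span]) (simp_all add: links)
qed

section \<open>Wheels\<close>

definition wheel_path :: "nat \<Rightarrow> (nat \<Rightarrow> nat) \<Rightarrow> (nat \<times> nat) list" where
  "wheel_path N \<sigma> = map (\<lambda>m. (\<sigma> m, \<sigma> (Suc m))) [0..<N - 1]"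

context
  fixes N :: nat and \<sigma> :: "nat \<Rightarrow> nat"
  assumes N: "N \<ge> 2" and bij: "bij_betw \<sigma> {..<N} {..<N}"
begin

lemma wheel_inj: "inj_on \<sigma> {..<N}"
  and wheel_onto: "\<sigma> ` {..<N} = {..<N}"
  using bij by (auto simp: bij_betw_def)

lemma wheel_less: "m < N \<Longrightarrow> \<sigma> m < N"
  using wheel_onto by blast

lemma wheel_ends_distinct: "\<sigma> (N - 1) \<noteq> \<sigma> 0"
  using inj_onD[OF wheel_inj, of "N - 1" 0] N by auto

lemma links_wheel_path: "links (wheel_path N \<sigma>) = {{\<sigma> m, \<sigma> (Suc m)} | m. m < N - 1}"
  unfolding wheel_path_def links_def by auto

lemma wheel_eq_insert_closing:
  "{{\<sigma> m, \<sigma> ((m + 1) mod N)} | m. m < N} = insert {\<sigma> (N - 1), \<sigma> 0} (links (wheel_path N \<sigma>))"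
proof (intro equalityI subsetI)
  fix e assume "e \<in> {{\<sigma> m, \<sigma> ((m + 1) mod N)} | m. m < N}"
  then obtain m where m: "m < N" "e = {\<sigma> m, \<sigma> ((m + 1) mod N)}" by blast
  show "e \<in> insert {\<sigma> (N - 1), \<sigma> 0} (links (wheel_path N \<sigma>))"
  proof (cases "m = N - 1")
    case True
    then have "(m + 1) mod N = 0" using N by simp
    then show ?thesis using m True by simp
  next
    case False
    then have "(m + 1) mod N = Suc m" using m(1) by simp
    then show ?thesis using m False unfolding links_wheel_path by auto
  qed
next
  fix e assume "e \<in> insert {\<sigma> (N - 1), \<sigma> 0} (links (wheel_path N \<sigma>))"
  then consider "e = {\<sigma> (N - 1), \<sigma> 0}" | m where "m < N - 1" "e = {\<sigma> m, \<sigma> (Suc m)}"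
    unfolding links_wheel_path by blast
  then show "e \<in> {{\<sigma> m, \<sigma> ((m + 1) mod N)} | m. m < N}"
  proof cases
    case 1
    have "(N - 1 + 1) mod N = 0" "N - 1 < N" using N by simp_all
    then have "e = {\<sigma> (N - 1), \<sigma> ((N - 1 + 1) mod N)}" "N - 1 < N" using 1 by simp_all
    then show ?thesis by blast
  next
    case 2
    then have "e = {\<sigma> m, \<sigma> ((m + 1) mod N)}" "m < N" by simp_all
    then show ?thesis by blast
  qed
qed

lemma joining_path_wheel_path: "joining_path N {} (wheel_path N \<sigma>)"
  unfolding wheel_path_def
proof (rule joining_path_fresh_ends)
  show "\<forall>m\<in>set [0..<N - 1]. \<sigma> m < N \<and> \<sigma> (Suc m) < N \<and> isolated {} (\<sigma> (Suc m))"
    using wheel_less by (simp add: isolated_def)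
  show "inj_on (\<lambda>m. \<sigma> (Suc m)) (set [0..<N - 1])"
  proof (rule inj_onI)
    fix x y assume "x \<in> set [0..<N - 1]" "y \<in> set [0..<N - 1]" "\<sigma> (Suc x) = \<sigma> (Suc y)"
    then have "Suc x = Suc y" using inj_onD[OF wheel_inj, of "Suc x" "Suc y"] by auto
    then show "x = y" by simp
  qed
  show "\<forall>m\<in>set [0..<N - 1]. \<forall>m'\<in>set [0..<N - 1]. m \<le> m' \<longrightarrow> \<sigma> m \<noteq> \<sigma> (Suc m')"
  proof (intro ballI impI notI)
    fix m m' assume "m \<in> set [0..<N - 1]" "m' \<in> set [0..<N - 1]" "m \<le> m'" "\<sigma> m = \<sigma> (Suc m')"
    moreover have "m < N" "Suc m' < N" using \<open>m' \<in> set [0..<N - 1]\<close> \<open>m \<le> m'\<close> by auto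
    ultimately have "m = Suc m'" using inj_onD[OF wheel_inj, of m "Suc m'"] by simp
    with \<open>m \<le> m'\<close> show False by simp
  qed
qed simp

lemma connected_wheel_path: "connected N (links (wheel_path N \<sigma>))"
proof (rule connectedI_from)
  have path_conn: "conn (links (wheel_path N \<sigma>)) (\<sigma> 0) (\<sigma> m)" if "m < N" for m
    using that
  proof (induction m)
    case (Suc m)
    then have "{\<sigma> m, \<sigma> (Suc m)} \<in> links (wheel_path N \<sigma>)" unfolding links_wheel_path by auto
    moreover have "conn (links (wheel_path N \<sigma>)) (\<sigma> 0) (\<sigma> m)" using Suc by simp
    ultimately show ?case using conn_trans[OF _ conn_edge] by blast
  qed simp
  fix x assume "x < N"
  then obtain m where "m < N" "x = \<sigma> m" using wheel_onto by (metis imageE lessThan_iff)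
  then show "conn (links (wheel_path N \<sigma>)) (\<sigma> 0) x" using path_conn by simp
qed

text \<open>The closing link turns the path into \<open>g\<close> itself, where it is kept by stability.\<close>
lemma G_IC_wheel:
  assumes \<delta>: "0 \<le> \<delta>" "\<delta> \<le> 1" and f_nonneg: "\<And>b. b < N \<Longrightarrow> 0 \<le> f (k b)" and Ef: "0 \<le> c" "c \<le> Ef"
    and g: "g = {{\<sigma> m, \<sigma> ((m + 1) mod N)} | m. m < N}" and stable: "stable_CI N \<delta> c f k g"
  shows "g \<in> G_IC N \<delta> c f k Ef"
proof -
  let ?e = "{\<sigma> (N - 1), \<sigma> 0}"
  have g_eq: "g = insert ?e (links (wheel_path N \<sigma>))" using g wheel_eq_insert_closing by simp
  have closing_formed: "decide N \<delta> c (\<lambda>_ b. f (k b)) h (\<sigma> (N - 1)) (\<sigma> 0) = insert ?e h"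
    if "links (wheel_path N \<sigma>) \<subseteq> h" "h \<subseteq> g" for h
  proof -
    have "insert ?e h = insert ?e g" "h - {?e} = g - {?e}" using that g_eq by auto
    then have "decide N \<delta> c (\<lambda>_ b. f (k b)) h (\<sigma> (N - 1)) (\<sigma> 0) = decide N \<delta> c (\<lambda>_ b. f (k b)) g (\<sigma> (N - 1)) (\<sigma> 0)"
      by (rule decide_cong_network)
    also have "\<dots> = g"
      using stable wheel_less wheel_ends_distinct N unfolding stable_CI_def by simp
    finally show ?thesis using \<open>insert ?e h = insert ?e g\<close> g_eq by simp
  qed
  have valid: "valid_path N [(\<sigma> (N - 1), \<sigma> 0)]" using wheel_less wheel_ends_distinct N by simp
  show ?thesis
    by (rule G_IC_by_spanning_path[OF \<delta> f_nonneg Ef stable joining_path_wheel_path connected_wheel_path valid])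
      (use closing_formed g_eq in simp_all)
qed

end

section \<open>The empty network\<close>

lemma conn_single_link: "conn {{i, j}} a b \<Longrightarrow> a \<noteq> b \<Longrightarrow> b = i \<or> b = j"
  using isolated_conn[of "{{i, j}}" b a] by (auto simp: isolated_def)

text \<open>Two agents who know each other and are linked to nobody else face exactly the
  complete-information choice in the empty network.\<close>
lemma decide_known_pair:
  assumes stable: "stable_CI N \<delta> c f k {}" and ij: "i < N" "j < N" "i \<noteq> j"
    and known: "K i j" "K j i" and h: "h \<subseteq> {{i, j}}"
  shows "decide N \<delta> c (valuation f k Ef K) h i j = {}"
proof -
  have ins: "insert {i, j} h = {{i, j}}" using h by auto
  have "decide N \<delta> c (valuation f k Ef K) h i j = decide N \<delta> c (\<lambda>_ b. f (k b)) h i j"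
  proof (rule decide_cong)
    fix b assume "b < N" "b \<noteq> i" "conn (insert {i, j} h) i b"
    then have "b = j" using conn_single_link[of i j i b] ins by auto
    then show "valuation f k Ef K i b = f (k b)" using known by (simp add: valuation_def)
  next
    fix b assume "b < N" "b \<noteq> j" "conn (insert {i, j} h) j b"
    then have "b = i" using conn_single_link[of i j j b] ins by auto
    then show "valuation f k Ef K j b = f (k b)" using known by (simp add: valuation_def)
  qed
  also have "\<dots> = decide N \<delta> c (\<lambda>_ b. f (k b)) {} i j"
    by (rule decide_cong_network) (use h in auto)
  also have "\<dots> = {}" using stable ij unfolding stable_CI_def by simp
  finally show ?thesis .
qed

context
  fixes N :: nat and \<delta> c Ef :: real and f :: "'x \<Rightarrow> real" and k :: "nat \<Rightarrow> 'x"
  assumes \<delta>: "0 \<le> \<delta>" "\<delta> \<le> 1" and f_nonneg: "\<And>b. b < N \<Longrightarrow> 0 \<le> f (k b)"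
    and Ef: "0 \<le> c" "c \<le> Ef" and stable: "stable_CI N \<delta> c f k {}"
begin

text \<open>Selecting a pair twice from the empty network: strangers link and meet, and then
  sever the link.\<close>
lemma run_IC_pair_twice:
  assumes ij: "i < N" "j < N" "i \<noteq> j" and sym: "\<forall>a b. K a b \<longrightarrow> K b a"
  shows "\<exists>K'. run_IC N \<delta> c f k Ef ({}, K) [(i, j), (i, j)] = ({}, K') \<and>
    K' i j \<and> (\<forall>a b. K' a b \<longrightarrow> K' b a)"
proof -
  define h1 where "h1 = decide N \<delta> c (valuation f k Ef K) {} i j"
  define K1 where "K1 = (\<lambda>a b. K a b \<or> conn h1 a b)"
  have step1: "step_IC N \<delta> c f k Ef ({}, K) (i, j) = (h1, K1)"
    unfolding step_IC_eq h1_def K1_def ..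
  have h1: "h1 \<subseteq> {{i, j}}" unfolding h1_def decide_def by auto
  have K1: "K1 i j \<and> K1 j i"
  proof (cases "K i j")
    case True
    then show ?thesis using sym unfolding K1_def by blast
  next
    case False
    moreover have "\<not> K j i" using False sym by blast
    ultimately have "h1 = {{i, j}}"
      using decide_unconnected[where f=f and k=k and Ef=Ef and c=c and \<delta>=\<delta>, OF \<delta> f_nonneg Ef ij, of "{}"] ij(3)
      unfolding h1_def by simp
    then show ?thesis unfolding K1_def using conn_edge[of i j h1] conn_edge[of j i h1] by (simp add: insert_commute)
  qed
  define K2 where "K2 = (\<lambda>a b. K1 a b \<or> conn {} a b)"
  have "step_IC N \<delta> c f k Ef (h1, K1) (i, j) = ({}, K2)"
    using decide_known_pair[OF stable ij _ _ h1] K1 unfolding step_IC_eq K2_def by simp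
  moreover have "\<forall>a b. K2 a b \<longrightarrow> K2 b a"
    using sym conn_sym unfolding K2_def K1_def by blast
  ultimately show ?thesis using step1 K1 unfolding K2_def by auto
qed

lemma run_IC_pairs_twice:
  assumes "\<forall>(i, j)\<in>set ps. i < N \<and> j < N \<and> i \<noteq> j" and "\<forall>a b. K a b \<longrightarrow> K b a"
  shows "\<exists>K'. run_IC N \<delta> c f k Ef ({}, K) (concat (map (\<lambda>x. [x, x]) ps)) = ({}, K') \<and>
    (\<forall>(i, j)\<in>set ps. K' i j)"
  using assms
proof (induction ps arbitrary: K)
  case (Cons x ps)
  obtain i j where x: "x = (i, j)" by fastforce
  obtain K1 where K1: "run_IC N \<delta> c f k Ef ({}, K) [(i, j), (i, j)] = ({}, K1)"
    "K1 i j" "\<forall>a b. K1 a b \<longrightarrow> K1 b a"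
    using run_IC_pair_twice[of i j K] Cons.prems x by auto
  obtain K2 where K2: "run_IC N \<delta> c f k Ef ({}, K1) (concat (map (\<lambda>x. [x, x]) ps)) = ({}, K2)"
    "\<forall>(i, j)\<in>set ps. K2 i j"
    using Cons.IH[of K1] Cons.prems(1) K1(3) by auto
  have "snd (run_IC N \<delta> c f k Ef ({}, K1) (concat (map (\<lambda>x. [x, x]) ps))) i j"
    by (rule run_IC_knowledge_mono) (simp add: K1(2))
  then have "K2 i j" using K2(1) by simp
  then show ?case using K1(1) K2 x by (simp add: run_IC_append[symmetric])
qed simp

lemma G_IC_empty: "{} \<in> G_IC N \<delta> c f k Ef"
proof -
  define ps where "ps = filter (\<lambda>(i, j). i \<noteq> j) (List.product [0..<N] [0..<N])"
  have set_ps: "set ps = {(i, j). i < N \<and> j < N \<and> i \<noteq> j}" by (auto simp: ps_def)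
  obtain K where run: "run_IC N \<delta> c f k Ef init_state (concat (map (\<lambda>x. [x, x]) ps)) = ({}, K)"
    and known: "\<forall>(i, j)\<in>set ps. K i j"
    using run_IC_pairs_twice[of ps "\<lambda>_ _. False"] set_ps by (auto simp: init_state_def)
  have "fully_informed N K" using known set_ps by (auto simp: fully_informed_def)
  moreover have "valid_path N (concat (map (\<lambda>x. [x, x]) ps))" using set_ps by (auto simp: valid_path_def)
  ultimately show ?thesis using G_IC_intro[OF stable _ run] by blast
qed

end

theorem theorem2:
  fixes N :: nat and \<delta> c :: real and H :: "'x measure" and f :: "'x \<Rightarrow> real"
    and k :: "nat \<Rightarrow> 'x" and g :: "nat set set"
  assumes N2: "N \<ge> 2"
    and delta: "0 < \<delta>" "\<delta> < 1"
    and cpos: "c > 0"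
    and prior: "prob_space H"
    and integ: "integrable H f"
    and fpos: "\<forall>x\<in>space H. f x > 0"
    and types: "\<forall>i<N. k i \<in> space H"
    and Ef_ge: "(\<integral>x. f x \<partial>H) \<ge> c"
    and net: "network N g"
    and stab: "stable_CI N \<delta> c f k g"
    and cls: "g = {} \<or> is_tree N g \<or> is_star N g \<or> is_complete N g
              \<or> is_core_periphery N g \<or> is_wheel N g"
  shows "g \<in> G_IC N \<delta> c f k (\<integral>x. f x \<partial>H)"
proof -
  have \<delta>: "0 \<le> \<delta>" "\<delta> \<le> 1" using delta by auto
  have f_nonneg: "0 \<le> f (k b)" if "b < N" for b
    using fpos types that by (blast intro: less_imp_le)
  have Ef: "0 \<le> c" "c \<le> (\<integral>x. f x \<partial>H)" using Ef_ge cpos by auto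
  from cls consider "g = {}" | "is_tree N g"
    | "is_star N g \<or> is_complete N g \<or> is_core_periphery N g" | "is_wheel N g" by blast
  then show ?thesis
  proof cases
    case 1
    then show ?thesis using \<delta> f_nonneg Ef stab by (simp add: G_IC_empty)
  next
    case 2
    with \<delta> f_nonneg Ef net show ?thesis using stab by (rule G_IC_tree)
  next
    case 3
    moreover have "0 < N" using N2 by simp
    ultimately obtain C hub where "core_periphery_with N C hub g"
      using core_periphery_with_if_class[OF _ net] by blast
    from this \<delta> f_nonneg Ef stab show ?thesis by (rule G_IC_core_periphery)
  next
    case 4
    then obtain \<sigma> where bij: "bij_betw \<sigma> {..<N} {..<N}" and wheel: "g = {{\<sigma> m, \<sigma> ((m + 1) mod N)} | m. m < N}"
      unfolding is_wheel_def by blast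
    from \<delta> f_nonneg Ef wheel stab show ?thesis by (rule G_IC_wheel[OF N2 bij])
  qed
qed

end
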